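(* Let $\delta\in(0,1)$ and let $f:G_\delta\to\mathbb{C}$ be a function. Suppose there are a Hilbert space $\mathcal{M}$, a unitary operator $U$ on $\mathcal{M}$ and a map $u:G_\delta\to\mathcal{M}$ (not assumed holomorphic) such that for all $\lambda,\mu\in G_\delta$, $$1-\overline{f(\mu)}f(\lambda)=\langle(1-\mu_U^*\lambda_U)u(\lambda),u(\mu)\rangle_{\mathcal{M}}.$$ Then $u$ is holomorphic on $G_\delta$.
   Context: $G_\delta=\{x+iy: x,y\in\mathbb{R},\ \frac{x^2}{(1+\delta)^2}+\frac{y^2}{(1-\delta)^2}<1\}$. For $\lambda\in G_\delta$ and a unitary $U$ on $\mathcal{M}$, $\lambda_U=(\delta U^*-\tfrac12\lambda)(1-\tfrac12\lambda U^* )^{-1}$. *)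

theory Defs
  imports "HOL-Analysis.Analysis"
begin

text \<open>A complex Hilbert space
  is a type of class complex_inner that is also a complete_space.\<close>

class complex_inner = real_normed_vector +
  fixes scaleC :: "complex \<Rightarrow> 'a \<Rightarrow> 'a"
    and cinner :: "'a \<Rightarrow> 'a \<Rightarrow> complex"
  assumes scaleC_add_right: "scaleC a (x + y) = scaleC a x + scaleC a y"
    and scaleC_add_left: "scaleC (a + b) x = scaleC a x + scaleC b x"
    and scaleC_scaleC: "scaleC a (scaleC b x) = scaleC (a * b) x"
    and scaleC_one: "scaleC 1 x = x"
    and scaleC_of_real: "scaleC (complex_of_real r) x = scaleR r x"
    and cinner_add_left: "cinner (x + y) z = cinner x z + cinner y z"
    and cinner_scaleC_left: "cinner (scaleC a x) y = a * cinner x y"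
    and cinner_commute: "cinner y x = cnj (cinner x y)"
    and cinner_self_norm: "cinner x x = complex_of_real ((norm x)\<^sup>2)"

definition unitary_op :: "('a::complex_inner \<Rightarrow> 'a) \<Rightarrow> bool" where
  "unitary_op U \<longleftrightarrow>
     (\<forall>x y. U (x + y) = U x + U y) \<and> (\<forall>a x. U (scaleC a x) = scaleC a (U x)) \<and>
     bij U \<and> (\<forall>x y. cinner (U x) (U y) = cinner x y)"

definition G :: "real \<Rightarrow> complex set" where
  "G \<delta> = {z. (Re z)\<^sup>2 / (1 + \<delta>)\<^sup>2 + (Im z)\<^sup>2 / (1 - \<delta>)\<^sup>2 < 1}"

text \<open>lambda_U = (delta U^* - lambda/2)(1 - lambda/2 U^*)^{-1}, with U^* = U^{-1} for unitary U.\<close>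
definition lamU :: "real \<Rightarrow> ('a::complex_inner \<Rightarrow> 'a) \<Rightarrow> complex \<Rightarrow> 'a \<Rightarrow> 'a" where
  "lamU \<delta> U l v =
     (let Ustar = inv U;
          w = inv (\<lambda>y. y - scaleC (l / 2) (Ustar y)) v
      in scaleC (complex_of_real \<delta>) (Ustar w) - scaleC (l / 2) w)"

definition holomorphic_vec :: "(complex \<Rightarrow> 'a::complex_inner) \<Rightarrow> complex set \<Rightarrow> bool" where
  "holomorphic_vec u S \<longleftrightarrow> (\<forall>z\<in>S. \<exists>v. (u has_derivative (\<lambda>h. scaleC h v)) (at z))"

end

theory Submission
  imports Defs
begin

text \<open>
  Put \<open>V = U\<inverse>\<close> and \<open>w(\<lambda>) = (1 - (\<lambda>/2) V)\<inverse> u(\<lambda>)\<close>; the inverse exists because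
  \<open>|\<lambda>/2| < 1\<close> on \<open>G\<^sub>\<delta>\<close>. Then \<open>u(\<lambda>) = w(\<lambda>) - (\<lambda>/2) V w(\<lambda>)\<close> and
  \<open>\<lambda>\<^sub>U u(\<lambda>) = \<delta> V w(\<lambda>) - (\<lambda>/2) w(\<lambda>)\<close>, and for finitely many coefficients \<open>c\<^sub>\<lambda>\<close> with
  \<open>\<Sum> c\<^sub>\<lambda> = 0\<close> the hypothesis gives \<open>\<parallel>A - V B\<parallel> \<le> \<parallel>\<delta> V A - B\<parallel>\<close>, where
  \<open>A = \<Sum> c\<^sub>\<lambda> w(\<lambda>)\<close> and \<open>B = \<Sum> c\<^sub>\<lambda> (\<lambda>/2) w(\<lambda>)\<close>. Write \<open>B = (\<lambda>\<^sub>0/2) A + E\<close> and expand: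
  the part quadratic in \<open>A\<close> is \<open>Re (D \<lambda>\<^sub>0 \<langle>VA, A\<rangle>)\<close>, where \<open>D(x + iy) = (1-\<delta>)x + i(1+\<delta>)y\<close>
  maps \<open>G\<^sub>\<delta>\<close> onto the disc of radius \<open>1 - \<delta>\<^sup>2\<close>, so \<open>k \<parallel>A\<parallel> \<le> 4 \<parallel>E\<parallel>\<close> whenever
  \<open>|D \<lambda>\<^sub>0| \<le> 1 - \<delta>\<^sup>2 - k\<close>. With two points this bounds the difference quotients of \<open>w\<close> at \<open>z\<close>;
  with three points it shows that they are Lipschitz near \<open>z\<close>. Hence they converge, \<open>w\<close> is
  holomorphic, and so is \<open>u\<close>.
\<close>

section \<open>Complex inner product spaces\<close>

interpretation cvs: vector_space "scaleC :: complex \<Rightarrow> 'a::complex_inner \<Rightarrow> 'a"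
  by unfold_locales (simp_all add: scaleC_add_right scaleC_add_left scaleC_scaleC scaleC_one)

lemma additive_cinner_left: "Modules.additive (\<lambda>x. cinner x y)"
  by (rule Modules.additive.intro) (rule cinner_add_left)

lemma additive_cinner_right: "Modules.additive (\<lambda>y. cinner x y)"
  by (rule Modules.additive.intro) (metis cinner_add_left cinner_commute complex_cnj_add)

lemmas cinner_add_right = Modules.additive.add[OF additive_cinner_right]
lemmas cinner_diff_left = Modules.additive.diff[OF additive_cinner_left]
lemmas cinner_diff_right = Modules.additive.diff[OF additive_cinner_right]
lemmas cinner_sum_left = Modules.additive.sum[OF additive_cinner_left]
lemmas cinner_sum_right = Modules.additive.sum[OF additive_cinner_right]
lemmas cinner_zero_left = Modules.additive.zero[OF additive_cinner_left]
lemmas cinner_zero_right = Modules.additive.zero[OF additive_cinner_right]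
lemmas cinner_minus_left = Modules.additive.minus[OF additive_cinner_left]
lemmas cinner_minus_right = Modules.additive.minus[OF additive_cinner_right]

lemma cinner_scaleC_right: "cinner x (scaleC a y) = cnj a * cinner x y"
  by (metis cinner_scaleC_left cinner_commute complex_cnj_mult)

lemmas cinner_simps = cinner_zero_left cinner_zero_right cinner_minus_left cinner_minus_right
  cinner_add_left cinner_add_right cinner_diff_left cinner_diff_right
  cinner_scaleC_left cinner_scaleC_right

lemma Re_cinner_self: "Re (cinner x x) = (norm x)\<^sup>2"
  by (simp add: cinner_self_norm)

lemma norm_scaleC: "norm (scaleC a x) = cmod a * norm x"
proof -
  have "cinner (scaleC a x) (scaleC a x) = a * cnj a * cinner x x"
    by (simp add: cinner_simps)
  then have "complex_of_real ((norm (scaleC a x))\<^sup>2) = a * cnj a * complex_of_real ((norm x)\<^sup>2)"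
    by (simp only: cinner_self_norm)
  also have "\<dots> = complex_of_real ((cmod a * norm x)\<^sup>2)"
    by (simp add: complex_norm_square[symmetric] power_mult_distrib)
  finally have "(norm (scaleC a x))\<^sup>2 = (cmod a * norm x)\<^sup>2"
    using of_real_eq_iff by blast
  then show ?thesis
    by (simp add: power2_eq_iff_nonneg)
qed

lemma norm_diff_sq: "(norm (x - y))\<^sup>2 = (norm x)\<^sup>2 + (norm y)\<^sup>2 - 2 * Re (cinner x y)"
proof -
  have "Re (cinner y x) = Re (cinner x y)"
    by (subst cinner_commute) simp
  then show ?thesis
    by (simp add: Re_cinner_self[symmetric] cinner_simps)
qed

lemma Re_cinner_le_norm: "Re (cinner x y) \<le> norm x * norm y"
proof (cases "y = 0")
  case True
  then show ?thesis by (simp add: cinner_simps)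
next
  case False
  define t where "t = Re (cinner x y) / (norm y)\<^sup>2"
  have "0 \<le> (norm (x - scaleC (complex_of_real t) y))\<^sup>2"
    by simp
  also have "\<dots> = (norm x)\<^sup>2 + t\<^sup>2 * (norm y)\<^sup>2 - 2 * t * Re (cinner x y)"
    by (simp add: norm_diff_sq norm_scaleC cinner_simps power_mult_distrib)
  also have "\<dots> = (norm x)\<^sup>2 - (Re (cinner x y))\<^sup>2 / (norm y)\<^sup>2"
    using False by (simp add: t_def field_simps power2_eq_square)
  finally have "(Re (cinner x y))\<^sup>2 \<le> (norm x * norm y)\<^sup>2"
    using False by (simp add: field_simps power_mult_distrib)
  then show ?thesis
    by (simp add: abs_le_square_iff[symmetric])
qed

lemma norm_cinner_le: "cmod (cinner x y) \<le> norm x * norm y"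
proof (cases "cinner x y = 0")
  case True
  then show ?thesis by simp
next
  case False
  \<comment> \<open>rotate x so that the inner product becomes real and positive\<close>
  define e where "e = cnj (cinner x y) / cmod (cinner x y)"
  have "cinner x y * cnj (cinner x y) = complex_of_real (cmod (cinner x y)) ^ 2"
    by (metis complex_norm_square of_real_power)
  then have "cinner (scaleC e x) y = complex_of_real (cmod (cinner x y))"
    using False by (simp add: e_def cinner_scaleC_left power2_eq_square field_simps)
  then have "cmod (cinner x y) = Re (cinner (scaleC e x) y)"
    by simp
  also have "\<dots> \<le> norm x * norm y"
    using Re_cinner_le_norm[of "scaleC e x" y] False by (simp add: norm_scaleC e_def norm_divide)
  finally show ?thesis .
qed

interpretation scaleC_bilinear: bounded_bilinear "scaleC :: complex \<Rightarrow> 'a::complex_inner \<Rightarrow> 'a"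
proof
  fix r :: real and a :: complex and x :: 'a
  show "scaleC (r *\<^sub>R a) x = r *\<^sub>R scaleC a x"
    by (simp add: scaleR_conv_of_real scaleC_of_real[symmetric])
  show "scaleC a (r *\<^sub>R x) = r *\<^sub>R scaleC a x"
    by (simp add: scaleC_of_real[symmetric] mult.commute)
  show "\<exists>K. \<forall>a x. norm (scaleC a (x::'a)) \<le> norm a * norm x * K"
    by (rule exI[of _ 1]) (simp add: norm_scaleC)
qed (simp_all add: scaleC_add_left scaleC_add_right)

definition linear_isometry :: "('a::complex_inner \<Rightarrow> 'a) \<Rightarrow> bool" where
  "linear_isometry V \<longleftrightarrow> Modules.additive V \<and> (\<forall>a x. V (scaleC a x) = scaleC a (V x)) \<and>
     (\<forall>x y. cinner (V x) (V y) = cinner x y)"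

lemma linear_isometry_additive: "linear_isometry V \<Longrightarrow> Modules.additive V"
  and linear_isometry_scaleC: "linear_isometry V \<Longrightarrow> V (scaleC a x) = scaleC a (V x)"
  and linear_isometry_cinner: "linear_isometry V \<Longrightarrow> cinner (V x) (V y) = cinner x y"
  by (simp_all add: linear_isometry_def)

lemmas linear_isometry_add = Modules.additive.add[OF linear_isometry_additive]
lemmas linear_isometry_diff = Modules.additive.diff[OF linear_isometry_additive]
lemmas linear_isometry_sum = Modules.additive.sum[OF linear_isometry_additive]

lemma linear_isometry_norm:
  assumes "linear_isometry V"
  shows "norm (V x) = norm x"
proof -
  have "(norm (V x))\<^sup>2 = (norm x)\<^sup>2"
    using assms by (metis cinner_self_norm linear_isometry_cinner of_real_eq_iff)
  then show ?thesis
    by (simp add: power2_eq_iff_nonneg)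
qed

lemma linear_isometry_bounded_linear:
  assumes "linear_isometry V"
  shows "bounded_linear V"
proof (rule bounded_linear_intro[where K = 1])
  fix r :: real and x
  show "V (r *\<^sub>R x) = r *\<^sub>R V x"
    using assms by (simp add: scaleC_of_real[symmetric] linear_isometry_scaleC)
qed (use assms in \<open>simp_all add: linear_isometry_add linear_isometry_norm\<close>)

lemma linear_isometry_inv_unitary:
  assumes "unitary_op U"
  shows "linear_isometry (inv U)"
proof -
  have "bij U" and U_add: "\<And>x y. U (x + y) = U x + U y"
    and U_scaleC: "\<And>a x. U (scaleC a x) = scaleC a (U x)"
    and U_cinner: "\<And>x y. cinner (U x) (U y) = cinner x y"
    using assms by (auto simp: unitary_op_def)
  then have U_inv: "\<And>x. U (inv U x) = x" and inv_U: "\<And>x. inv U (U x) = x"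
    by (simp_all add: bij_is_inj bij_is_surj surj_f_inv_f)
  show ?thesis
    unfolding linear_isometry_def Modules.additive_def
    by (metis U_inv inv_U U_add U_scaleC U_cinner)
qed

lemma bij_minus_scaleC_isometry:
  fixes V :: "'a::{complex_inner,complete_space} \<Rightarrow> 'a"
  assumes V: "linear_isometry V" and a: "cmod a < 1"
  shows "bij (\<lambda>y. y - scaleC a (V y))"
proof (rule bijI)
  have contraction: "norm (scaleC a (V x) - scaleC a (V y)) \<le> cmod a * norm (x - y)" for x y
    using V by (simp add: cvs.scale_right_diff_distrib[symmetric] linear_isometry_diff[symmetric]
        norm_scaleC linear_isometry_norm)
  show "inj (\<lambda>y. y - scaleC a (V y))"
  proof (rule injI)
    fix x y
    assume "x - scaleC a (V x) = y - scaleC a (V y)"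
    then have "x - y = scaleC a (V x) - scaleC a (V y)"
      by (simp add: algebra_simps)
    then have "norm (x - y) \<le> cmod a * norm (x - y)"
      using contraction[of x y] by simp
    then show "x = y"
      using a by (metis mult_le_cancel_right1 norm_ge_zero not_le zero_less_norm_iff right_minus_eq)
  qed
  show "surj (\<lambda>y. y - scaleC a (V y))"
  proof (rule surjI)
    fix v
    obtain y where "v + scaleC a (V y) = y"
      using banach_fix_type[of "cmod a" "\<lambda>y. v + scaleC a (V y)"] a contraction
      by (auto simp: dist_norm)
    then show "(SOME y. y - scaleC a (V y) = v) - scaleC a (V (SOME y. y - scaleC a (V y) = v)) = v"
      by (metis (mono_tags) add_diff_cancel someI)
  qed
qed

section \<open>The ellipse\<close>

definition ellipse_to_disc :: "real \<Rightarrow> complex \<Rightarrow> complex" where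
  "ellipse_to_disc \<delta> l = Complex ((1 - \<delta>) * Re l) ((1 + \<delta>) * Im l)"

lemma ellipse_to_disc_add: "ellipse_to_disc \<delta> (l + m) = ellipse_to_disc \<delta> l + ellipse_to_disc \<delta> m"
  by (simp add: ellipse_to_disc_def complex_eq_iff algebra_simps)

lemma norm_ellipse_to_disc_sq:
  "(cmod (ellipse_to_disc \<delta> l))\<^sup>2 = (1 - \<delta>)\<^sup>2 * (Re l)\<^sup>2 + (1 + \<delta>)\<^sup>2 * (Im l)\<^sup>2"
  by (simp add: ellipse_to_disc_def cmod_power2 power_mult_distrib)

lemma norm_ellipse_to_disc_bounds:
  assumes "0 \<le> \<delta>"
  shows "(1 - \<delta>) * cmod l \<le> cmod (ellipse_to_disc \<delta> l)"
    and "cmod (ellipse_to_disc \<delta> l) \<le> (1 + \<delta>) * cmod l"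
proof -
  have "(1 - \<delta>)\<^sup>2 \<le> (1 + \<delta>)\<^sup>2"
    using assms by (simp add: power2_eq_square algebra_simps)
  then have "(1 - \<delta>)\<^sup>2 * (Im l)\<^sup>2 \<le> (1 + \<delta>)\<^sup>2 * (Im l)\<^sup>2"
    and "(1 - \<delta>)\<^sup>2 * (Re l)\<^sup>2 \<le> (1 + \<delta>)\<^sup>2 * (Re l)\<^sup>2"
    by (simp_all add: mult_right_mono)
  moreover have "((1 - \<delta>) * cmod l)\<^sup>2 = (1 - \<delta>)\<^sup>2 * (Re l)\<^sup>2 + (1 - \<delta>)\<^sup>2 * (Im l)\<^sup>2"
    and "((1 + \<delta>) * cmod l)\<^sup>2 = (1 + \<delta>)\<^sup>2 * (Re l)\<^sup>2 + (1 + \<delta>)\<^sup>2 * (Im l)\<^sup>2"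
    by (simp_all add: power_mult_distrib cmod_power2 distrib_left)
  ultimately have "((1 - \<delta>) * cmod l)\<^sup>2 \<le> (cmod (ellipse_to_disc \<delta> l))\<^sup>2"
    and "(cmod (ellipse_to_disc \<delta> l))\<^sup>2 \<le> ((1 + \<delta>) * cmod l)\<^sup>2"
    unfolding norm_ellipse_to_disc_sq by linarith+
  then show "(1 - \<delta>) * cmod l \<le> cmod (ellipse_to_disc \<delta> l)"
    and "cmod (ellipse_to_disc \<delta> l) \<le> (1 + \<delta>) * cmod l"
    using assms by (simp_all add: power2_le_iff_abs_le)
qed

lemma mem_G_iff:
  assumes "0 < \<delta>" "\<delta> < 1"
  shows "l \<in> G \<delta> \<longleftrightarrow> cmod (ellipse_to_disc \<delta> l) < 1 - \<delta>\<^sup>2"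
proof -
  have "0 < 1 - \<delta>\<^sup>2"
    using assms by (simp add: abs_square_less_1)
  have "(1 - \<delta>\<^sup>2)\<^sup>2 = (1 + \<delta>)\<^sup>2 * (1 - \<delta>)\<^sup>2"
    by (simp add: power2_eq_square algebra_simps)
  then have "l \<in> G \<delta> \<longleftrightarrow> (1 - \<delta>)\<^sup>2 * (Re l)\<^sup>2 + (1 + \<delta>)\<^sup>2 * (Im l)\<^sup>2 < (1 - \<delta>\<^sup>2)\<^sup>2"
    using assms by (simp add: G_def field_simps)
  also have "\<dots> \<longleftrightarrow> cmod (ellipse_to_disc \<delta> l) < 1 - \<delta>\<^sup>2"
    using \<open>0 < 1 - \<delta>\<^sup>2\<close> power2_less_imp_less[of "cmod (ellipse_to_disc \<delta> l)" "1 - \<delta>\<^sup>2"]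
      power_strict_mono[of "cmod (ellipse_to_disc \<delta> l)" "1 - \<delta>\<^sup>2" 2]
    by (auto simp: norm_ellipse_to_disc_sq[symmetric])
  finally show ?thesis .
qed

lemma open_G: "open (G \<delta>)"
  unfolding G_def divide_inverse by (intro open_Collect_less continuous_intros)

lemma norm_half_lt_1_if_mem_G:
  assumes "0 < \<delta>" "\<delta> < 1" "l \<in> G \<delta>"
  shows "cmod (l / 2) < 1"
proof -
  have "(1 - \<delta>) * cmod l < (1 - \<delta>) * (1 + \<delta>)"
    using norm_ellipse_to_disc_bounds(1)[of \<delta> l] mem_G_iff[of \<delta> l] assms
    by (simp add: power2_eq_square algebra_simps)
  then show ?thesis
    using assms by (simp add: norm_divide)
qed

lemma norm_ellipse_to_disc_lipschitz:
  assumes "0 \<le> \<delta>"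
  shows "cmod (ellipse_to_disc \<delta> l) \<le> cmod (ellipse_to_disc \<delta> z) + (1 + \<delta>) * cmod (l - z)"
proof -
  have "cmod (ellipse_to_disc \<delta> l) \<le> cmod (ellipse_to_disc \<delta> z) + cmod (ellipse_to_disc \<delta> (l - z))"
    using norm_triangle_ineq[of "ellipse_to_disc \<delta> z" "ellipse_to_disc \<delta> (l - z)"]
    by (simp add: ellipse_to_disc_add[symmetric])
  then show ?thesis
    using norm_ellipse_to_disc_bounds(2)[OF assms, of "l - z"] by linarith
qed

section \<open>The kernel inequality\<close>

lemma kernel_sum_identity:
  fixes X Y :: "'b \<Rightarrow> 'a::complex_inner"
  assumes "finite I"
    and kernel: "\<And>l m. l \<in> I \<Longrightarrow> m \<in> I \<Longrightarrow>
      1 - cnj (f m) * f l = cinner (X l) (X m) - cinner (Y l) (Y m)"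
  shows "(norm (\<Sum>l\<in>I. scaleC (c l) (X l)))\<^sup>2 - (norm (\<Sum>l\<in>I. scaleC (c l) (Y l)))\<^sup>2
       = (cmod (sum c I))\<^sup>2 - (cmod (\<Sum>l\<in>I. c l * f l))\<^sup>2"
proof -
  have gram: "cinner (\<Sum>l\<in>I. scaleC (c l) (Z l)) (\<Sum>m\<in>I. scaleC (c m) (Z m))
      = (\<Sum>l\<in>I. \<Sum>m\<in>I. c l * cnj (c m) * cinner (Z l) (Z m))" for Z :: "'b \<Rightarrow> 'a"
    by (subst sum.swap) (simp add: cinner_sum_left cinner_sum_right cinner_simps sum_distrib_left mult_ac)
  have "complex_of_real ((norm (\<Sum>l\<in>I. scaleC (c l) (X l)))\<^sup>2 - (norm (\<Sum>l\<in>I. scaleC (c l) (Y l)))\<^sup>2)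
      = (\<Sum>l\<in>I. \<Sum>m\<in>I. c l * cnj (c m) * (1 - cnj (f m) * f l))"
    by (simp add: cinner_self_norm[symmetric] gram kernel right_diff_distrib sum_subtractf[symmetric]
        del: of_real_power)
  also have "\<dots> = complex_of_real ((cmod (sum c I))\<^sup>2 - (cmod (\<Sum>l\<in>I. c l * f l))\<^sup>2)"
    by (simp add: complex_norm_square sum_product cnj_sum right_diff_distrib sum_subtractf mult_ac
        del: of_real_power)
  finally show ?thesis
    using of_real_eq_iff by blast
qed

lemma isometry_inequality_bound:
  fixes A B E :: "'a::complex_inner"
  assumes V: "linear_isometry V" and \<delta>: "0 \<le> \<delta>" "\<delta> \<le> 1"
    and l: "cmod (ellipse_to_disc \<delta> l) \<le> 1 - \<delta>\<^sup>2 - k"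
    and AB: "norm (A - V B) \<le> norm (scaleC (complex_of_real \<delta>) (V A) - B)"
    and B: "B = scaleC (l / 2) A + E"
  shows "k * norm A \<le> 4 * norm E"
proof -
  define s where "s = cinner (V A) A"
  have s': "cinner A (V A) = cnj s"
    unfolding s_def by (rule cinner_commute)
  have "(1 - \<delta>\<^sup>2) * (norm A)\<^sup>2 \<le> 2 * Re (cinner A (V B)) - 2 * \<delta> * Re (cinner (V A) B)"
    using power_mono[OF AB norm_ge_zero, of 2] V \<delta>
    by (simp add: norm_diff_sq norm_scaleC linear_isometry_norm cinner_simps power_mult_distrib algebra_simps)
  also have "\<dots> = Re (ellipse_to_disc \<delta> l * s) + 2 * Re (cinner A (V E)) - 2 * \<delta> * Re (cinner (V A) E)"
    using V by (simp add: B s' linear_isometry_add linear_isometry_scaleC cinner_simps s_def[symmetric]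
        ellipse_to_disc_def algebra_simps) (simp add: field_simps)
  also have "\<dots> \<le> (1 - \<delta>\<^sup>2 - k) * (norm A)\<^sup>2 + 2 * (1 + \<delta>) * (norm A * norm E)"
  proof -
    have "Re (ellipse_to_disc \<delta> l * s) \<le> cmod (ellipse_to_disc \<delta> l) * cmod s"
      using complex_Re_le_cmod[of "ellipse_to_disc \<delta> l * s"] by (simp add: norm_mult)
    also have "\<dots> \<le> (1 - \<delta>\<^sup>2 - k) * (norm A)\<^sup>2"
      using l norm_cinner_le[of "V A" A] V order_trans[OF norm_ge_zero l]
      by (intro mult_mono) (auto simp: s_def linear_isometry_norm power2_eq_square)
    finally have "Re (ellipse_to_disc \<delta> l * s) \<le> (1 - \<delta>\<^sup>2 - k) * (norm A)\<^sup>2" .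
    moreover have "Re (cinner A (V E)) \<le> norm A * norm E"
      using Re_cinner_le_norm[of A "V E"] V by (simp add: linear_isometry_norm)
    moreover have "- Re (cinner (V A) E) \<le> norm A * norm E"
      using Re_cinner_le_norm[of "V A" "- E"] V by (simp add: linear_isometry_norm cinner_minus_right)
    then have "\<delta> * (- Re (cinner (V A) E)) \<le> \<delta> * (norm A * norm E)"
      using \<delta> by (intro mult_left_mono)
    ultimately show ?thesis
      by (simp add: algebra_simps)
  qed
  finally have "k * (norm A * norm A) \<le> (2 * (1 + \<delta>) * norm E) * norm A"
    by (simp add: algebra_simps power2_eq_square)
  then have "k * norm A \<le> 2 * (1 + \<delta>) * norm E"
    using \<delta> by (cases "norm A = 0") (auto simp: mult.assoc[symmetric] mult_le_cancel_right)
  also have "\<dots> \<le> 4 * norm E"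
    using \<delta> by (intro mult_right_mono) auto
  finally show ?thesis .
qed

section \<open>Difference quotients\<close>

definition diff_quot :: "(complex \<Rightarrow> 'a::complex_inner) \<Rightarrow> complex \<Rightarrow> complex \<Rightarrow> 'a" where
  "diff_quot w z l = scaleC (1 / (l - z)) (w l - w z)"

lemma diff_quot_times: "l \<noteq> z \<Longrightarrow> scaleC (l - z) (diff_quot w z l) = w l - w z"
  by (simp add: diff_quot_def)

lemma norm_diff_quot: "norm (diff_quot w z l) = norm (w l - w z) / cmod (l - z)"
  unfolding diff_quot_def norm_scaleC by (simp add: norm_divide)

lemma has_derivative_if_diff_quot_tendsto:
  assumes "(diff_quot w z \<longlongrightarrow> v) (at z)"
  shows "(w has_derivative (\<lambda>h. scaleC h v)) (at z)"
  unfolding has_derivative_iff_norm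
proof
  show "bounded_linear (\<lambda>h. scaleC h v)"
    by (rule scaleC_bilinear.bounded_linear_left)
  have "\<forall>\<^sub>F y in at z. norm (diff_quot w z y - v) = norm (w y - w z - scaleC (y - z) v) / norm (y - z)"
  proof (rule eventually_at_filter[THEN iffD2], intro always_eventually allI impI)
    fix y assume "y \<noteq> z"
    then have "w y - w z - scaleC (y - z) v = scaleC (y - z) (diff_quot w z y - v)"
      by (simp add: diff_quot_times cvs.scale_right_diff_distrib)
    with \<open>y \<noteq> z\<close> show "norm (diff_quot w z y - v) = norm (w y - w z - scaleC (y - z) v) / norm (y - z)"
      by (simp add: norm_scaleC)
  qed
  moreover have "((\<lambda>y. norm (diff_quot w z y - v)) \<longlongrightarrow> 0) (at z)"
    using assms by (intro tendsto_norm_zero) (simp add: LIM_zero)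
  ultimately show "((\<lambda>y. norm (w y - w z - scaleC (y - z) v) / norm (y - z)) \<longlongrightarrow> 0) (at z)"
    by (rule Lim_transform_eventually[rotated])
qed

lemma tendsto_if_lipschitz_on_punctured_ball:
  fixes g :: "'a::{real_normed_vector,perfect_space} \<Rightarrow> 'b::complete_space"
  assumes "0 < \<rho>" and "L-lipschitz_on (ball z \<rho> - {z}) g"
  obtains v where "(g \<longlongrightarrow> v) (at z)"
proof -
  have "z islimpt ball z \<rho>"
    using assms(1) by (simp add: islimpt_ball)
  then have "z \<in> closure (ball z \<rho> - {z})"
    using islimpt_in_closure by blast
  then obtain v where "(g \<longlongrightarrow> v) (at z within ball z \<rho> - {z})"
    using uniformly_continuous_on_extension_at_closure[OF lipschitz_on_uniformly_continuous[OF assms(2)]]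
    by blast
  moreover have "at z within ball z \<rho> - {z} = at z within ball z \<rho>"
    unfolding at_within_def by (simp add: Diff_eq Int_assoc)
  ultimately have "(g \<longlongrightarrow> v) (at z)"
    using tendsto_within_open[of z "ball z \<rho>" g v] assms(1) by simp
  then show ?thesis ..
qed

lemma has_derivative_minus_half_scaleC_isometry:
  assumes V: "linear_isometry V" and w: "(w has_derivative (\<lambda>h. scaleC h v)) (at z)"
  shows "((\<lambda>l. w l - scaleC (l / 2) (V (w l))) has_derivative
           (\<lambda>h. scaleC h (v - scaleC (z / 2) (V v) - scaleC (1 / 2) (V (w z))))) (at z)"
proof -
  have "((\<lambda>l. V (w l)) has_derivative (\<lambda>h. V (scaleC h v))) (at z)"
    using bounded_linear.has_derivative[OF linear_isometry_bounded_linear[OF V] w] .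
  moreover have "((\<lambda>l. l / 2) has_derivative (\<lambda>h. h / 2)) (at z)"
    by (auto intro!: derivative_eq_intros)
  ultimately have "((\<lambda>l. scaleC (l / 2) (V (w l))) has_derivative
      (\<lambda>h. scaleC (z / 2) (V (scaleC h v)) + scaleC (h / 2) (V (w z)))) (at z)"
    by (rule scaleC_bilinear.FDERIV[rotated])
  from has_derivative_diff[OF w this] show ?thesis
    by (rule has_derivative_eq_rhs)
      (simp add: fun_eq_iff linear_isometry_scaleC[OF V] algebra_simps)
qed

locale ellipse_kernel =
  fixes \<delta> :: real and V :: "'a::{complex_inner,complete_space} \<Rightarrow> 'a"
    and w :: "complex \<Rightarrow> 'a" and f :: "complex \<Rightarrow> complex"
  assumes \<delta>_pos: "0 < \<delta>" and \<delta>_less_1: "\<delta> < 1"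
    and isometry: "linear_isometry V"
    and kernel: "\<And>l m. l \<in> G \<delta> \<Longrightarrow> m \<in> G \<delta> \<Longrightarrow>
      1 - cnj (f m) * f l
        = cinner (w l - scaleC (l / 2) (V (w l))) (w m - scaleC (m / 2) (V (w m)))
        - cinner (scaleC (complex_of_real \<delta>) (V (w l)) - scaleC (l / 2) (w l))
                 (scaleC (complex_of_real \<delta>) (V (w m)) - scaleC (m / 2) (w m))"
begin

lemma sum_zero_combination_bound:
  assumes I: "finite I" "I \<subseteq> G \<delta>" and c: "sum c I = 0"
    and l: "cmod (ellipse_to_disc \<delta> l) \<le> 1 - \<delta>\<^sup>2 - k"
  shows "k * norm (\<Sum>m\<in>I. scaleC (c m) (w m))
    \<le> 4 * norm (\<Sum>m\<in>I. scaleC (c m * ((m - l) / 2)) (w m))"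
proof -
  define A where "A = (\<Sum>m\<in>I. scaleC (c m) (w m))"
  define B where "B = (\<Sum>m\<in>I. scaleC (c m * (m / 2)) (w m))"
  define E where "E = (\<Sum>m\<in>I. scaleC (c m * ((m - l) / 2)) (w m))"
  have "(norm (\<Sum>m\<in>I. scaleC (c m) (w m - scaleC (m / 2) (V (w m)))))\<^sup>2
      - (norm (\<Sum>m\<in>I. scaleC (c m) (scaleC (complex_of_real \<delta>) (V (w m)) - scaleC (m / 2) (w m))))\<^sup>2
      = (cmod (sum c I))\<^sup>2 - (cmod (\<Sum>m\<in>I. c m * f m))\<^sup>2"
    by (rule kernel_sum_identity) (use I kernel in auto)
  moreover have "(\<Sum>m\<in>I. scaleC (c m) (w m - scaleC (m / 2) (V (w m)))) = A - V B"
    by (simp add: A_def B_def linear_isometry_sum[OF isometry] linear_isometry_scaleC[OF isometry]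
        cvs.scale_right_diff_distrib sum_subtractf mult.commute)
  moreover have "(\<Sum>m\<in>I. scaleC (c m) (scaleC (complex_of_real \<delta>) (V (w m)) - scaleC (m / 2) (w m)))
      = scaleC (complex_of_real \<delta>) (V A) - B"
    by (simp add: A_def B_def linear_isometry_sum[OF isometry] linear_isometry_scaleC[OF isometry]
        cvs.scale_right_diff_distrib cvs.scale_sum_right sum_subtractf mult.commute)
  ultimately have "(norm (A - V B))\<^sup>2 - (norm (scaleC (complex_of_real \<delta>) (V A) - B))\<^sup>2
      = - (cmod (\<Sum>m\<in>I. c m * f m))\<^sup>2"
    using c by simp
  then have "(norm (A - V B))\<^sup>2 \<le> (norm (scaleC (complex_of_real \<delta>) (V A) - B))\<^sup>2"
    by (smt (verit) zero_le_power2)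
  then have "norm (A - V B) \<le> norm (scaleC (complex_of_real \<delta>) (V A) - B)"
    by (rule power2_le_imp_le) simp
  moreover have "B = scaleC (l / 2) A + E"
  proof -
    have coeff: "l / 2 * c m + c m * ((m - l) / 2) = c m * (m / 2)" for m
      by (simp add: field_simps)
    have "scaleC (l / 2) A + E = (\<Sum>m\<in>I. scaleC (l / 2 * c m + c m * ((m - l) / 2)) (w m))"
      by (simp only: A_def E_def cvs.scale_sum_right cvs.scale_scale sum.distrib[symmetric]
          cvs.scale_left_distrib[symmetric])
    then show ?thesis
      by (simp only: coeff B_def)
  qed
  ultimately show ?thesis
    unfolding A_def E_def using \<delta>_pos \<delta>_less_1
    by (intro isometry_inequality_bound[OF isometry _ _ l]) auto
qed

lemma norm_w_diff_le:
  assumes "l \<in> G \<delta>" "z \<in> G \<delta>" and l: "cmod (ellipse_to_disc \<delta> l) \<le> 1 - \<delta>\<^sup>2 - k"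
  shows "k * norm (w l - w z) \<le> 2 * cmod (l - z) * norm (w z)"
proof (cases "l = z")
  case True
  then show ?thesis by simp
next
  case False
  define c where "c m = (if m = l then 1 else -1 :: complex)" for m
  have "k * norm (\<Sum>m\<in>{l, z}. scaleC (c m) (w m))
      \<le> 4 * norm (\<Sum>m\<in>{l, z}. scaleC (c m * ((m - l) / 2)) (w m))"
    using assms False by (intro sum_zero_combination_bound[OF _ _ _ l]) (auto simp: c_def)
  moreover have "(\<Sum>m\<in>{l, z}. scaleC (c m) (w m)) = w l - w z"
    using False by (simp add: c_def)
  moreover have "(\<Sum>m\<in>{l, z}. scaleC (c m * ((m - l) / 2)) (w m)) = scaleC ((l - z) / 2) (w z)"
    using False by (simp add: c_def)
  ultimately show ?thesis
    by (simp add: norm_scaleC norm_divide mult_ac)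
qed

lemma norm_diff_quot_diff_le:
  assumes "l \<in> G \<delta>" "m \<in> G \<delta>" "z \<in> G \<delta>" "l \<noteq> z" "m \<noteq> z"
    and l: "cmod (ellipse_to_disc \<delta> l) \<le> 1 - \<delta>\<^sup>2 - k"
  shows "k * norm (diff_quot w z l - diff_quot w z m)
    \<le> 2 * cmod (l - m) * norm (diff_quot w z m)"
proof (cases "l = m")
  case True
  then show ?thesis by simp
next
  case False
  define a where "a = 1 / (l - z)"
  define b where "b = 1 / (m - z)"
  define c where "c p = (if p = l then a else if p = m then - b else b - a)" for p
  have "k * norm (\<Sum>p\<in>{l, m, z}. scaleC (c p) (w p))
      \<le> 4 * norm (\<Sum>p\<in>{l, m, z}. scaleC (c p * ((p - l) / 2)) (w p))"
    using assms False by (intro sum_zero_combination_bound[OF _ _ _ l]) (auto simp: c_def)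
  moreover have "(\<Sum>p\<in>{l, m, z}. scaleC (c p) (w p)) = diff_quot w z l - diff_quot w z m"
    using assms False
    by (simp add: c_def a_def b_def diff_quot_def cvs.scale_right_diff_distrib cvs.scale_left_diff_distrib)
  moreover have "(\<Sum>p\<in>{l, m, z}. scaleC (c p * ((p - l) / 2)) (w p))
      = scaleC ((l - m) / 2) (diff_quot w z m)"
  proof -
    have "a * (l - z) = 1" "b * (m - z) = 1"
      using assms by (simp_all add: a_def b_def)
    then have "(b - a) * (z - l) / 2 = - ((l - m) * b / 2)"
      by algebra
    moreover have "- b * ((m - l) / 2) = (l - m) / 2 * b"
      by (simp add: field_simps)
    ultimately show ?thesis
      using assms False
      by (simp add: c_def diff_quot_def b_def[symmetric] cvs.scale_right_diff_distrib cvs.scale_minus_left)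
  qed
  ultimately show ?thesis
    by (simp add: norm_scaleC norm_divide)
qed

lemma has_derivative_w:
  assumes z: "z \<in> G \<delta>"
  obtains v where "(w has_derivative (\<lambda>h. scaleC h v)) (at z)"
proof -
  define k where "k = (1 - \<delta>\<^sup>2 - cmod (ellipse_to_disc \<delta> z)) / 2"
  have k: "0 < k"
    using z mem_G_iff[OF \<delta>_pos \<delta>_less_1] by (simp add: k_def)
  have near: "cmod (ellipse_to_disc \<delta> l) \<le> 1 - \<delta>\<^sup>2 - k \<and> l \<in> G \<delta>" if "l \<in> ball z (k / 2)" for l
  proof -
    have "(1 + \<delta>) * cmod (l - z) \<le> 2 * (k / 2)"
      using that \<delta>_less_1 by (intro mult_mono) (auto simp: dist_norm norm_minus_commute)
    then have "cmod (ellipse_to_disc \<delta> l) \<le> 1 - \<delta>\<^sup>2 - k"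
      using norm_ellipse_to_disc_lipschitz[OF less_imp_le[OF \<delta>_pos], of l z]
      by (simp add: k_def field_simps)
    then show ?thesis
      using k mem_G_iff[OF \<delta>_pos \<delta>_less_1, of l] by simp
  qed
  have bound: "norm (diff_quot w z m) \<le> 2 * norm (w z) / k" if "m \<in> ball z (k / 2) - {z}" for m
  proof -
    have "k * norm (w m - w z) \<le> 2 * cmod (m - z) * norm (w z)"
      using norm_w_diff_le near that z by blast
    then show ?thesis
      using that k by (simp add: norm_diff_quot field_simps)
  qed
  have "(4 * norm (w z) / k\<^sup>2)-lipschitz_on (ball z (k / 2) - {z}) (diff_quot w z)"
  proof (rule lipschitz_onI)
    fix l m
    assume l: "l \<in> ball z (k / 2) - {z}" and m: "m \<in> ball z (k / 2) - {z}"
    have "k * norm (diff_quot w z l - diff_quot w z m) \<le> 2 * cmod (l - m) * norm (diff_quot w z m)"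
      using norm_diff_quot_diff_le near l m z by blast
    also have "\<dots> \<le> 2 * cmod (l - m) * (2 * norm (w z) / k)"
      using bound[OF m] by (intro mult_left_mono) auto
    finally show "dist (diff_quot w z l) (diff_quot w z m) \<le> 4 * norm (w z) / k\<^sup>2 * dist l m"
      using k by (simp add: dist_norm field_simps power2_eq_square)
  qed simp
  then obtain v where "(diff_quot w z \<longlongrightarrow> v) (at z)"
    using tendsto_if_lipschitz_on_punctured_ball k by (metis half_gt_zero)
  then show thesis
    using that has_derivative_if_diff_quot_tendsto by blast
qed

end

theorem proposition2p8:
  fixes \<delta> :: real and f :: "complex \<Rightarrow> complex"
    and U :: "'m::{complex_inner, complete_space} \<Rightarrow> 'm"
    and u :: "complex \<Rightarrow> 'm"
  assumes "0 < \<delta>" and "\<delta> < 1"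
    and "unitary_op U"
    and "\<forall>l\<in>G \<delta>. \<forall>m\<in>G \<delta>.
           1 - cnj (f m) * f l
             = cinner (u l) (u m) - cinner (lamU \<delta> U l (u l)) (lamU \<delta> U m (u m))"
  shows "holomorphic_vec u (G \<delta>)"
proof -
  define V where "V = inv U"
  define w where "w l = inv (\<lambda>y. y - scaleC (l / 2) (V y)) (u l)" for l
  have V: "linear_isometry V"
    unfolding V_def using assms(3) by (rule linear_isometry_inv_unitary)
  have u_eq: "u l = w l - scaleC (l / 2) (V (w l))" if "l \<in> G \<delta>" for l
  proof -
    have "bij (\<lambda>y. y - scaleC (l / 2) (V y))"
      using bij_minus_scaleC_isometry[OF V norm_half_lt_1_if_mem_G[OF assms(1,2) that]] .
    from surj_f_inv_f[OF bij_is_surj[OF this]] show ?thesis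
      by (simp add: w_def)
  qed
  have lamU_eq: "lamU \<delta> U l (u l) = scaleC (complex_of_real \<delta>) (V (w l)) - scaleC (l / 2) (w l)" for l
    by (simp add: lamU_def Let_def w_def V_def)
  interpret ellipse_kernel \<delta> V w f
    by unfold_locales (use assms(1,2) V assms(4)[unfolded lamU_eq] in \<open>simp_all add: u_eq\<close>)
  show ?thesis
    unfolding holomorphic_vec_def
  proof
    fix z
    assume z: "z \<in> G \<delta>"
    obtain v where "(w has_derivative (\<lambda>h. scaleC h v)) (at z)"
      using has_derivative_w[OF z] .
    then have "((\<lambda>l. w l - scaleC (l / 2) (V (w l))) has_derivative
        (\<lambda>h. scaleC h (v - scaleC (z / 2) (V v) - scaleC (1 / 2) (V (w z))))) (at z)"
      by (rule has_derivative_minus_half_scaleC_isometry[OF V])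
    then have "(u has_derivative
        (\<lambda>h. scaleC h (v - scaleC (z / 2) (V v) - scaleC (1 / 2) (V (w z))))) (at z)"
      by (rule has_derivative_transform_within_open[OF _ open_G z]) (simp add: u_eq)
    then show "\<exists>v. (u has_derivative (\<lambda>h. scaleC h v)) (at z)" ..
  qed
qed

end
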